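(* Let $\varepsilon$ be a centered Gaussian process on $\mathbb{R}^d$ with unit variance and correlation function $\rho$, let $Y(x)=(2\pi)^{1/2}\varepsilon(x)$, and for a tuple $y=(y_1,\ldots,y_n)\in(\mathbb{R}^d)^n$ with positive definite covariance matrix $\Sigma_y$ of $\varepsilon(y)$, let $\lambda_y$ be the density of $\Lambda_y(A)=\int_0^\infty\Pr\{\zeta Y(y)\in A\}\zeta^{-2}d\zeta$, $A\subset\mathbb{R}^n$ Borel, namely $\lambda_y(w)=\pi^{-(n-1)/2}|\Sigma_y|^{-1/2}(w^T\Sigma_y^{-1}w)^{-(n+1)/2}\Gamma((n+1)/2)$. Let $m,k\ge1$, $s\in(\mathbb{R}^d)^m$, $x\in(\mathbb{R}^d)^k$ such that the covariance matrix $$\Sigma_{(s,x)}=\begin{bmatrix}\Sigma_s&\Sigma_{s:x}\\ \Sigma_{x:s}&\Sigma_x\end{bmatrix}$$ of $(\varepsilon(s),\varepsilon(x))$ is positive definite. Then for all $u\in\mathbb{R}^m$ and $z\in\mathbb{R}^k\setminus\{0\}$, the conditional intensity function $\lambda_{s\mid x,z}(u)=\lambda_{(s,x)}(u,z)/\lambda_x(z)$ is the density of a multivariate Student distribution with $k+1$ degrees of freedom, location $\mu=\Sigma_{s:x}\Sigma_x^{-1}z$ and scale matrix $\tilde\Sigma=\frac{a_x(z)}{k+1}(\Sigma_s-\Sigma_{s:x}\Sigma_x^{-1}\Sigma_{x:s})$, where $a_x(z)=z^T\Sigma_x^{-1}z$; that is, $$\lambda_{s\mid x,z}(u)=\pi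^{-m/2}(k+1)^{-m/2}|\tilde\Sigma|^{-1/2}\left\{1+\frac{(u-\mu)^T\tilde\Sigma^{-1}(u-\mu)}{k+1}\right\}^{-(m+k+1)/2}\frac{\Gamma\left(\frac{m+k+1}{2}\right)}{\Gamma\left(\frac{k+1}{2}\right)}.$$
   Context: This is the Schlather max-stable model, represented with $Y=(2\pi)^{1/2}\varepsilon$ and $\{\zeta_i\}$ a Poisson process on $(0,\infty)$ with intensity $\zeta^{-2}d\zeta$. For tuples, $\varepsilon(y)$ denotes the vector of values at the points of $y$; $(s,x)$ denotes the concatenated tuple and $(u,z)$ the concatenated vector; $\Sigma_{s:x}$ is the cross-covariance matrix between $\varepsilon(s)$ and $\varepsilon(x)$ and $\Sigma_{x:s}=\Sigma_{s:x}^T$. *)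

theory Defs
  imports "HOL-Analysis.Analysis"
begin

definition correlation_function :: "(real^'d \<Rightarrow> real^'d \<Rightarrow> real) \<Rightarrow> bool" where
  "correlation_function \<rho> \<longleftrightarrow>
     (\<forall>p q. \<rho> p q = \<rho> q p) \<and> (\<forall>p. \<rho> p p = 1) \<and>
     (\<forall>(ps :: (real^'d) list) (cs :: real list). length cs = length ps \<longrightarrow>
        0 \<le> (\<Sum>i<length ps. \<Sum>j<length ps. cs!i * cs!j * \<rho> (ps!i) (ps!j)))"

definition cov_mat :: "(real^'d \<Rightarrow> real^'d \<Rightarrow> real) \<Rightarrow> ('n::finite \<Rightarrow> real^'d) \<Rightarrow> real^'n^'n" where
  "cov_mat \<rho> y = (\<chi> i j. \<rho> (y i) (y j))"

definition cross_cov :: "(real^'d \<Rightarrow> real^'d \<Rightarrow> real) \<Rightarrow> ('m::finite \<Rightarrow> real^'d) \<Rightarrow> ('k::finite \<Rightarrow> real^'d) \<Rightarrow> real^'k^'m" where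
  "cross_cov \<rho> s x = (\<chi> i j. \<rho> (s i) (x j))"

definition pos_def :: "real^'n^'n \<Rightarrow> bool" where
  "pos_def A \<longleftrightarrow> transpose A = A \<and> (\<forall>v. v \<noteq> 0 \<longrightarrow> 0 < v \<bullet> (A *v v))"

definition concat_pts :: "('m \<Rightarrow> 'a) \<Rightarrow> ('k \<Rightarrow> 'a) \<Rightarrow> ('m + 'k \<Rightarrow> 'a)" where
  "concat_pts s x = case_sum s x"

definition concat_vec :: "real^'m::finite \<Rightarrow> real^'k::finite \<Rightarrow> real^('m + 'k)" where
  "concat_vec u z = (\<chi> i. case i of Inl a \<Rightarrow> u $ a | Inr b \<Rightarrow> z $ b)"

definition lambda_dens :: "(real^'d \<Rightarrow> real^'d \<Rightarrow> real) \<Rightarrow> ('n::finite \<Rightarrow> real^'d) \<Rightarrow> real^'n \<Rightarrow> real" where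
  "lambda_dens \<rho> y w =
     (let n = real CARD('n); S = cov_mat \<rho> y in
      pi powr (-(n - 1) / 2) * det S powr (-1/2)
      * (w \<bullet> (matrix_inv S *v w)) powr (-(n + 1) / 2) * Gamma ((n + 1) / 2))"

definition cond_intensity :: "(real^'d \<Rightarrow> real^'d \<Rightarrow> real) \<Rightarrow> ('m::finite \<Rightarrow> real^'d) \<Rightarrow> ('k::finite \<Rightarrow> real^'d)
     \<Rightarrow> real^'k \<Rightarrow> real^'m \<Rightarrow> real" where
  "cond_intensity \<rho> s x z u = lambda_dens \<rho> (concat_pts s x) (concat_vec u z) / lambda_dens \<rho> x z"

definition student_density :: "real \<Rightarrow> real^'m::finite \<Rightarrow> real^'m^'m \<Rightarrow> real^'m \<Rightarrow> real" where
  "student_density \<nu> \<mu> S u =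
     (let m = real CARD('m) in
      pi powr (-m/2) * \<nu> powr (-m/2) * det S powr (-1/2)
      * (1 + ((u - \<mu>) \<bullet> (matrix_inv S *v (u - \<mu>))) / \<nu>) powr (-(m + \<nu>) / 2)
      * Gamma ((m + \<nu>) / 2) / Gamma (\<nu> / 2))"

end

theory Submission
  imports Defs
begin

text \<open>Write \<open>\<Sigma>\<^sub>(\<^sub>s\<^sub>,\<^sub>x\<^sub>)\<close> in block form \<open>[A B; B\<^sup>T C]\<close> with \<open>C = \<Sigma>\<^sub>x\<close>, and let
  \<open>S = A - B C\<^sup>-\<^sup>1 B\<^sup>T\<close> be the Schur complement. Block elimination gives
  \<open>det \<Sigma>\<^sub>(\<^sub>s\<^sub>,\<^sub>x\<^sub>) = det S * det C\<close> and splits the quadratic form as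
  \<open>(u,z)\<^sup>T \<Sigma>\<^sub>(\<^sub>s\<^sub>,\<^sub>x\<^sub>)\<^sup>-\<^sup>1 (u,z) = a + q\<close> with \<open>a = z\<^sup>T C\<^sup>-\<^sup>1 z\<close> and \<open>q = (u - \<mu>)\<^sup>T S\<^sup>-\<^sup>1 (u - \<mu>)\<close>.
  In the ratio \<open>\<lambda>\<^sub>(\<^sub>s\<^sub>,\<^sub>x\<^sub>)(u,z) / \<lambda>\<^sub>x(z)\<close> the factor \<open>det C\<close> cancels, and
  \<open>(a + q)\<^sup>-\<^sup>(\<^sup>m\<^sup>+\<^sup>k\<^sup>+\<^sup>1\<^sup>)\<^sup>/\<^sup>2 / a\<^sup>-\<^sup>(\<^sup>k\<^sup>+\<^sup>1\<^sup>)\<^sup>/\<^sup>2 = a\<^sup>-\<^sup>m\<^sup>/\<^sup>2 (1 + q/a)\<^sup>-\<^sup>(\<^sup>m\<^sup>+\<^sup>k\<^sup>+\<^sup>1\<^sup>)\<^sup>/\<^sup>2\<close> is exactly the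
  Student kernel for the scale matrix \<open>(a/(k+1)) S\<close>. Positive definiteness of \<open>C\<close> and \<open>S\<close>,
  inherited from the joint matrix, makes every determinant and base of a power positive.\<close>

definition block_mat ::
    "real^'m::finite^'m \<Rightarrow> real^'k::finite^'m \<Rightarrow> real^'m^'k \<Rightarrow> real^'k^'k \<Rightarrow> real^('m+'k)^('m+'k)" where
  "block_mat P Q R T = (\<chi> i j. case i of
      Inl a \<Rightarrow> (case j of Inl b \<Rightarrow> P$a$b | Inr b \<Rightarrow> Q$a$b)
    | Inr a \<Rightarrow> (case j of Inl b \<Rightarrow> R$a$b | Inr b \<Rightarrow> T$a$b))"

definition schur_complement :: "real^'m::finite^'m \<Rightarrow> real^'k::finite^'m \<Rightarrow> real^'k^'k \<Rightarrow> real^'m^'m" where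
  "schur_complement A B C = A - B ** matrix_inv C ** transpose B"

lemma block_mat_nth [simp]:
  "block_mat P Q R T $ Inl a $ Inl b = P$a$b" "block_mat P Q R T $ Inl a $ Inr c = Q$a$c"
  "block_mat P Q R T $ Inr c $ Inl b = R$c$b" "block_mat P Q R T $ Inr c $ Inr d = T$c$d"
  by (simp_all add: block_mat_def)

lemma concat_vec_nth [simp]: "concat_vec u z $ Inl a = u $ a" "concat_vec u z $ Inr b = z $ b"
  by (simp_all add: concat_vec_def)

lemma sum_UNIV_Plus:
  "(\<Sum>i\<in>(UNIV::('a::finite+'b::finite) set). f i) = (\<Sum>a\<in>UNIV. f (Inl a)) + (\<Sum>b\<in>UNIV. f (Inr b))"
  by (subst UNIV_Plus_UNIV[symmetric], subst sum.Plus) (auto simp: o_def)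

lemma prod_UNIV_Plus:
  "(\<Prod>i\<in>(UNIV::('a::finite+'b::finite) set). f i) = (\<Prod>a\<in>UNIV. f (Inl a)) * (\<Prod>b\<in>UNIV. f (Inr b))"
  by (subst UNIV_Plus_UNIV[symmetric], subst prod.Plus) (auto simp: o_def)

lemma card_UNIV_Plus: "CARD('a::finite + 'b::finite) = CARD('a) + CARD('b)"
  by (subst UNIV_Plus_UNIV[symmetric], subst card_Plus) simp_all

lemma block_mat_mult_concat_vec:
  "block_mat P Q R T *v concat_vec v w = concat_vec (P *v v + Q *v w) (R *v v + T *v w)"
  unfolding vec_eq_iff
proof
  fix i :: "'a + 'b"
  show "(block_mat P Q R T *v concat_vec v w) $ i = concat_vec (P *v v + Q *v w) (R *v v + T *v w) $ i"
    by (cases i) (simp_all add: matrix_vector_mult_def sum_UNIV_Plus)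
qed

lemma inner_concat_vec: "concat_vec a b \<bullet> concat_vec c d = a \<bullet> c + b \<bullet> d"
  by (simp add: inner_vec_def sum_UNIV_Plus)

lemma concat_vec_eq_0_iff: "concat_vec a b = 0 \<longleftrightarrow> a = 0 \<and> b = 0"
  by (auto simp: vec_eq_iff concat_vec_def split: sum.splits)

lemma block_mat_mult:
  "block_mat P Q R T ** block_mat P' Q' R' T' =
     block_mat (P ** P' + Q ** R') (P ** Q' + Q ** T') (R ** P' + T ** R') (R ** Q' + T ** T')"
  unfolding vec_eq_iff
proof (intro allI)
  fix i j :: "'a + 'b"
  show "(block_mat P Q R T ** block_mat P' Q' R' T') $ i $ j =
    block_mat (P ** P' + Q ** R') (P ** Q' + Q ** T') (R ** P' + T ** R') (R ** Q' + T ** T') $ i $ j"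
    by (cases i; cases j) (simp_all add: matrix_matrix_mult_def sum_UNIV_Plus)
qed

lemma transpose_block_mat:
  "transpose (block_mat P Q R T) = block_mat (transpose P) (transpose R) (transpose Q) (transpose T)"
  unfolding vec_eq_iff
proof (intro allI)
  fix i j :: "'a + 'b"
  show "transpose (block_mat P Q R T) $ i $ j = block_mat (transpose P) (transpose R) (transpose Q) (transpose T) $ i $ j"
    by (cases i; cases j) (simp_all add: transpose_def)
qed

lemma block_mat_eq_iff:
  "block_mat P Q R T = block_mat P' Q' R' T' \<longleftrightarrow> P = P' \<and> Q = Q' \<and> R = R' \<and> T = T'"
proof
  assume "block_mat P Q R T = block_mat P' Q' R' T'"
  then have "\<And>i j. block_mat P Q R T $ i $ j = block_mat P' Q' R' T' $ i $ j" by simp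
  from this[of "Inl _" "Inl _"] this[of "Inl _" "Inr _"] this[of "Inr _" "Inl _"] this[of "Inr _" "Inr _"]
  show "P = P' \<and> Q = Q' \<and> R = R' \<and> T = T'" by (simp add: vec_eq_iff)
qed simp

lemma transpose_zero: "transpose 0 = (0::real^'n::finite^'m::finite)"
  by (simp add: transpose_def vec_eq_iff)

lemma transpose_diff: "transpose (A - B) = transpose A - (transpose B :: real^'n::finite^'m::finite)"
  by (simp add: transpose_def vec_eq_iff)

lemma matrix_vector_mult_uminus_right: "(M::real^'n::finite^'m::finite) *v (- y) = - (M *v y)"
  by (simp add: vec_eq_iff matrix_vector_mult_def sum_negf)

lemma matrix_mul_zero_left: "(0::real^'n::finite^'m::finite) ** (M::real^'p::finite^'n) = 0"
  by (simp add: vec_eq_iff matrix_matrix_mult_def)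

lemma matrix_mul_zero_right: "(M::real^'n::finite^'m::finite) ** (0::real^'p::finite^'n) = 0"
  by (simp add: vec_eq_iff matrix_matrix_mult_def)

lemma cov_mat_concat_pts:
  fixes s :: "'m::finite \<Rightarrow> real^'d" and x :: "'k::finite \<Rightarrow> real^'d"
  assumes "\<And>p q. \<rho> p q = \<rho> q p"
  shows "cov_mat \<rho> (concat_pts s x) =
    block_mat (cov_mat \<rho> s) (cross_cov \<rho> s x) (transpose (cross_cov \<rho> s x)) (cov_mat \<rho> x)"
  unfolding vec_eq_iff
proof (intro allI)
  fix i j :: "'m + 'k"
  show "cov_mat \<rho> (concat_pts s x) $ i $ j =
    block_mat (cov_mat \<rho> s) (cross_cov \<rho> s x) (transpose (cross_cov \<rho> s x)) (cov_mat \<rho> x) $ i $ j"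
    by (cases i; cases j) (simp_all add: cov_mat_def cross_cov_def concat_pts_def transpose_def assms)
qed

subsection \<open>Determinant of a block triangular matrix\<close>

lemma swapidseq_map_sum_left: "swapidseq n p \<Longrightarrow> swapidseq n (map_sum p (id::'b\<Rightarrow>'b))"
proof (induct n p rule: swapidseq.induct)
  case id
  then show ?case by (simp only: sum.map_id0 swapidseq.id)
next
  case (comp_Suc n p a b)
  have "map_sum (Transposition.transpose a b \<circ> p) (id::'b\<Rightarrow>'b) =
      Transposition.transpose (Inl a) (Inl b) \<circ> map_sum p id"
    by (rule ext, case_tac x) (auto simp: Transposition.transpose_def)
  moreover have "swapidseq (Suc n) (Transposition.transpose (Inl a) (Inl b) \<circ> map_sum p (id::'b\<Rightarrow>'b))"
    by (rule swapidseq.comp_Suc[OF comp_Suc(2)]) (use comp_Suc(3) in simp)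
  ultimately show ?case by (simp only:)
qed

lemma swapidseq_map_sum_right: "swapidseq n q \<Longrightarrow> swapidseq n (map_sum (id::'a\<Rightarrow>'a) q)"
proof (induct n q rule: swapidseq.induct)
  case id
  then show ?case by (simp only: sum.map_id0 swapidseq.id)
next
  case (comp_Suc n p a b)
  have "map_sum (id::'a\<Rightarrow>'a) (Transposition.transpose a b \<circ> p) =
      Transposition.transpose (Inr a) (Inr b) \<circ> map_sum id p"
    by (rule ext, case_tac x) (auto simp: Transposition.transpose_def)
  moreover have "swapidseq (Suc n) (Transposition.transpose (Inr a) (Inr b) \<circ> map_sum (id::'a\<Rightarrow>'a) p)"
    by (rule swapidseq.comp_Suc[OF comp_Suc(2)]) (use comp_Suc(3) in simp)
  ultimately show ?case by (simp only:)
qed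

lemma sign_map_sum:
  fixes p :: "'a::finite \<Rightarrow> 'a" and q :: "'b::finite \<Rightarrow> 'b"
  assumes "p permutes UNIV" "q permutes UNIV"
  shows "sign (map_sum p q) = sign p * sign q"
proof -
  obtain n m where n: "swapidseq n p" and m: "swapidseq m q"
    using assms permutes_imp_permutation[OF finite] unfolding permutation_def by metis
  have "map_sum p q = map_sum p (id::'b\<Rightarrow>'b) \<circ> map_sum (id::'a\<Rightarrow>'a) q"
    by (rule ext, case_tac x) simp_all
  then have "swapidseq (n + m) (map_sum p q)"
    using swapidseq_comp_add[OF swapidseq_map_sum_left[OF n] swapidseq_map_sum_right[OF m]] by simp
  then have "evenperm (map_sum p q) = even (n + m)" by (rule evenperm_unique) simp
  moreover have "evenperm p = even n" "evenperm q = even m"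
    by (rule evenperm_unique[OF n], simp) (rule evenperm_unique[OF m], simp)
  ultimately show ?thesis unfolding sign_def by auto
qed

lemma map_sum_permutes:
  assumes "p permutes UNIV" "q permutes UNIV"
  shows "map_sum p q permutes UNIV"
proof -
  have bp: "bij p" "bij q" using assms permutes_bij by blast+
  have "map_sum p q \<circ> map_sum (inv p) (inv q) = id" "map_sum (inv p) (inv q) \<circ> map_sum p q = id"
    by (rule ext, case_tac x, simp_all add: bp bij_is_surj surj_f_inv_f bij_is_inj inv_f_f)+
  then have "bij (map_sum p q)" by (rule o_bij[rotated])
  then show ?thesis by (rule bij_imp_permutes) simp_all
qed

lemma permutes_Plus_preserving_Inl:
  fixes p :: "'a::finite + 'b::finite \<Rightarrow> 'a + 'b"
  assumes p: "p permutes UNIV" and l: "\<And>a. p (Inl a) \<in> range Inl"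
  obtains p1 p2 where "p1 permutes UNIV" "p2 permutes UNIV" "p = map_sum p1 p2"
proof -
  define p1 where "p1 a = projl (p (Inl a))" for a
  have pl: "p (Inl a) = Inl (p1 a)" for a using l[of a] by (auto simp: p1_def)
  have ip: "inj p" using p permutes_inj by blast
  have "inj p1" unfolding inj_def using ip pl by (metis injD sum.inject(1))
  then have sp1: "surj p1" by (simp add: finite_UNIV_inj_surj)
  have r: "p (Inr b) \<in> range Inr" for b
  proof (rule ccontr)
    assume "p (Inr b) \<notin> range Inr"
    then obtain c where c: "p (Inr b) = Inl c" by (cases "p (Inr b)") auto
    obtain a where "p1 a = c" using sp1 by (metis surj_def)
    then have "p (Inl a) = p (Inr b)" using c pl by simp
    then show False using ip by (meson injD sum.distinct(1))
  qed
  define p2 where "p2 b = projr (p (Inr b))" for b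
  have pr: "p (Inr b) = Inr (p2 b)" for b using r[of b] by (auto simp: p2_def)
  have "inj p2" unfolding inj_def using ip pr by (metis injD sum.inject(2))
  then have sp2: "surj p2" by (simp add: finite_UNIV_inj_surj)
  have "p = map_sum p1 p2" by (rule ext, case_tac x) (simp_all add: pl pr)
  with \<open>inj p1\<close> sp1 \<open>inj p2\<close> sp2 show ?thesis
    by (intro that bij_imp_permutes) (auto simp: bij_def)
qed

lemma map_sum_eq_map_sum_iff: "map_sum p q = map_sum p' q' \<longleftrightarrow> p = p' \<and> q = q'"
  by (metis fun_eq_iff map_sum.simps sum.inject)

text \<open>Only permutations mapping each block onto itself contribute to the Leibniz
  expansion, since every other one meets the zero upper-right block.\<close>

lemma det_block_mat_lower_triangular:
  fixes P :: "real^'m::finite^'m" and T :: "real^'k::finite^'k"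
  shows "det (block_mat P 0 R T) = det P * det T"
proof -
  let ?M = "block_mat P 0 R T"
  let ?f = "\<lambda>p. of_int (sign p) * (\<Prod>i\<in>UNIV. ?M$i$p i)"
  let ?PP = "{p. p permutes (UNIV::'m set)} \<times> {q. q permutes (UNIV::'k set)}"
  let ?S = "(\<lambda>(p,q). map_sum p q) ` ?PP"
  have sub: "?S \<subseteq> {p. p permutes UNIV}" using map_sum_permutes by auto
  have zero: "?f p = 0" if "p permutes UNIV" "p \<notin> ?S" for p
  proof -
    obtain a c where "p (Inl a) = Inr c"
    proof (rule ccontr)
      assume "\<not> thesis"
      then have "\<And>a. p (Inl a) \<in> range Inl" using that by (metis range_eqI sum.exhaust)
      with \<open>p permutes UNIV\<close> obtain p1 p2 where "p1 permutes UNIV" "p2 permutes UNIV" "p = map_sum p1 p2"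
        by (rule permutes_Plus_preserving_Inl)
      with \<open>p \<notin> ?S\<close> show False by auto
    qed
    then have "?M $ Inl a $ p (Inl a) = 0" by simp
    then have "(\<Prod>i\<in>UNIV. ?M$i$p i) = 0" by (intro prod_zero) (auto intro!: bexI[of _ "Inl a"])
    then show ?thesis by simp
  qed
  have "det ?M = sum ?f ?S"
    unfolding det_def using zero by (intro sum.mono_neutral_right[OF finite_permutations sub]) auto
  also have "\<dots> = (\<Sum>(p,q)\<in>?PP. ?f (map_sum p q))"
    by (subst sum.reindex) (auto intro!: inj_onI simp: map_sum_eq_map_sum_iff case_prod_unfold)
  also have "\<dots> = (\<Sum>(p,q)\<in>?PP. (of_int (sign p) * (\<Prod>a\<in>UNIV. P$a$p a)) * (of_int (sign q) * (\<Prod>b\<in>UNIV. T$b$q b)))"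
    by (intro sum.cong refl) (auto simp: sign_map_sum prod_UNIV_Plus)
  also have "\<dots> = det P * det T"
    unfolding det_def sum_product sum.cartesian_product by (simp add: case_prod_unfold)
  finally show ?thesis .
qed

lemma matrix_inv_mult:
  fixes M :: "real^'n::finite^'n"
  assumes "invertible M"
  shows matrix_mult_matrix_inv: "M ** matrix_inv M = mat 1"
    and matrix_inv_mult_matrix: "matrix_inv M ** M = mat 1"
proof -
  have "\<exists>A'. M ** A' = mat 1 \<and> A' ** M = mat 1" using assms unfolding invertible_def by blast
  from someI_ex[OF this] show "M ** matrix_inv M = mat 1" "matrix_inv M ** M = mat 1"
    unfolding matrix_inv_def by blast+
qed

lemma matrix_inv_unique_right:
  fixes M N :: "real^'n::finite^'n"
  assumes "M ** N = mat 1"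
  shows "matrix_inv M = N"
proof -
  have "invertible M" using assms invertible_right_inverse by blast
  have "matrix_inv M = matrix_inv M ** (M ** N)" using assms by simp
  also have "\<dots> = N" by (simp add: matrix_mul_assoc matrix_inv_mult_matrix[OF \<open>invertible M\<close>])
  finally show ?thesis .
qed

lemma matrix_inv_mult_vec_eq:
  fixes M :: "real^'n::finite^'n"
  assumes "invertible M" "M *v w = v"
  shows "matrix_inv M *v v = w"
  using assms by (metis matrix_inv_mult_matrix matrix_vector_mul_assoc matrix_vector_mul_lid)

lemma matrix_inv_scaleR:
  fixes M :: "real^'n::finite^'n"
  assumes "c \<noteq> 0" "invertible M"
  shows "matrix_inv (c *\<^sub>R M) = inverse c *\<^sub>R matrix_inv M"
proof (rule matrix_inv_unique_right)
  have "(c *\<^sub>R M) ** (inverse c *\<^sub>R matrix_inv M) = (c * inverse c) *\<^sub>R (M ** matrix_inv M)"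
    by (simp add: matrix_scalar_ac scalar_matrix_assoc[symmetric])
  then show "(c *\<^sub>R M) ** (inverse c *\<^sub>R matrix_inv M) = mat 1"
    using assms by (simp add: matrix_mult_matrix_inv)
qed

lemma transpose_matrix_inv_symmetric:
  fixes M :: "real^'n::finite^'n"
  assumes "invertible M" "transpose M = M"
  shows "transpose (matrix_inv M) = matrix_inv M"
proof -
  have "M ** transpose (matrix_inv M) = mat 1"
    by (metis assms matrix_inv_mult_matrix matrix_transpose_mul transpose_mat)
  then show ?thesis by (rule matrix_inv_unique_right[symmetric])
qed

lemma inner_transpose_mult_vec: "(x::real^'n::finite) \<bullet> (transpose M *v y) = (M *v x) \<bullet> y"
  using dot_lmul_matrix[of y M x] by (simp add: inner_commute)

lemma det_scaleR: "det (c *\<^sub>R (M::real^'n::finite^'n)) = c ^ CARD('n) * det M"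
proof -
  have "c *\<^sub>R M = (c *\<^sub>R mat 1) ** M" by (simp only: scalar_matrix_assoc[symmetric] matrix_mul_lid)
  moreover have "det (c *\<^sub>R mat 1 :: real^'n^'n) = c ^ CARD('n)"
    by (subst det_diagonal) (auto simp: mat_def)
  ultimately show ?thesis by (simp only: det_mul)
qed

lemma pos_def_invertible:
  fixes M :: "real^'n::finite^'n"
  assumes "pos_def M" shows "invertible M"
proof -
  have "x = 0" if "M *v x = 0" for x
  proof (rule ccontr)
    assume "x \<noteq> 0"
    then have "0 < x \<bullet> (M *v x)" using assms unfolding pos_def_def by blast
    with \<open>M *v x = 0\<close> show False by simp
  qed
  then show ?thesis using invertible_left_inverse matrix_left_invertible_ker by blast
qed

lemma pos_def_matrix_inv:
  fixes M :: "real^'n::finite^'n"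
  assumes pd: "pos_def M" shows "pos_def (matrix_inv M)"
  unfolding pos_def_def
proof (intro conjI allI impI)
  have "invertible M" using pd by (rule pos_def_invertible)
  then show "transpose (matrix_inv M) = matrix_inv M"
    using pd transpose_matrix_inv_symmetric unfolding pos_def_def by blast
  fix v :: "real^'n" assume "v \<noteq> 0"
  define w where "w = matrix_inv M *v v"
  have Mw: "M *v w = v"
    by (simp add: w_def matrix_vector_mul_assoc matrix_mult_matrix_inv[OF \<open>invertible M\<close>])
  then have "w \<noteq> 0" using \<open>v \<noteq> 0\<close> by auto
  then have "0 < w \<bullet> (M *v w)" using pd unfolding pos_def_def by blast
  then show "0 < v \<bullet> (matrix_inv M *v v)" by (simp add: Mw inner_commute flip: w_def)
qed

text \<open>Positive definiteness is preserved along the segment from the identity to \<open>M\<close>,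
  so the determinant never vanishes there and keeps the sign of \<open>det (mat 1) = 1\<close>.\<close>

lemma pos_def_det_pos:
  fixes M :: "real^'n::finite^'n"
  assumes pd: "pos_def M" shows "det M > 0"
proof (rule ccontr)
  assume "\<not> det M > 0"
  define g where "g t = det ((1 - t) *\<^sub>R mat 1 + t *\<^sub>R M)" for t :: real
  have "continuous_on {0..1} g"
    unfolding g_def det_def by (intro continuous_intros)
  moreover have "g 0 = 1" "g 1 \<le> 0" using \<open>\<not> det M > 0\<close> by (simp_all add: g_def)
  ultimately obtain t where t: "t \<in> {0..1}" "g t = 0"
    using IVT2'[of g 1 0 0] by force
  have "pos_def ((1 - t) *\<^sub>R mat 1 + t *\<^sub>R M)"
    unfolding pos_def_def
  proof (intro conjI allI impI)
    show "transpose ((1 - t) *\<^sub>R mat 1 + t *\<^sub>R M) = (1 - t) *\<^sub>R mat 1 + t *\<^sub>R M"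
      using pd unfolding pos_def_def by (simp add: transpose_def vec_eq_iff mat_def)
    fix v :: "real^'n" assume "v \<noteq> 0"
    then have "0 < v \<bullet> v" "0 < v \<bullet> (M *v v)" using pd unfolding pos_def_def by auto
    moreover have "v \<bullet> (((1 - t) *\<^sub>R mat 1 + t *\<^sub>R M) *v v) = (1 - t) * (v \<bullet> v) + t * (v \<bullet> (M *v v))"
      by (simp add: matrix_vector_mult_add_rdistrib scaleR_matrix_vector_assoc[symmetric] inner_add_right)
    ultimately show "0 < v \<bullet> (((1 - t) *\<^sub>R mat 1 + t *\<^sub>R M) *v v)"
      using t by (cases "t = 0") (auto intro: add_nonneg_pos add_pos_nonneg)
  qed
  then have "det ((1 - t) *\<^sub>R mat 1 + t *\<^sub>R M) \<noteq> 0"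
    using pos_def_invertible invertible_det_nz by blast
  then show False using t by (simp add: g_def)
qed

lemma pos_def_quadratic_nonneg:
  fixes M :: "real^'n::finite^'n"
  assumes "pos_def M" shows "0 \<le> v \<bullet> (M *v v)"
  using assms unfolding pos_def_def by (cases "v = 0") (auto intro: less_imp_le)

subsection \<open>Schur complements\<close>

lemma symmetric_block_mat_iff:
  "transpose (block_mat A B (transpose B) C) = block_mat A B (transpose B) C \<longleftrightarrow>
    transpose A = A \<and> transpose C = C"
  by (auto simp: transpose_block_mat block_mat_eq_iff)

lemma pos_def_block_mat_lower_right:
  fixes A :: "real^'m::finite^'m" and C :: "real^'k::finite^'k"
  assumes pd: "pos_def (block_mat A B (transpose B) C)"
  shows "pos_def C"
  unfolding pos_def_def
proof (intro conjI allI impI)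
  show "transpose C = C" using pd unfolding pos_def_def symmetric_block_mat_iff by blast
  fix v :: "real^'k" assume "v \<noteq> 0"
  then have "concat_vec (0::real^'m) v \<noteq> 0" by (simp add: concat_vec_eq_0_iff)
  then have "0 < concat_vec (0::real^'m) v \<bullet> (block_mat A B (transpose B) C *v concat_vec 0 v)"
    using pd unfolding pos_def_def by blast
  then show "0 < v \<bullet> (C *v v)" by (simp add: block_mat_mult_concat_vec inner_concat_vec)
qed

text \<open>The quadratic form of \<open>S\<close> at \<open>v\<close> is that of the block matrix at \<open>(v, -C\<^sup>-\<^sup>1 B\<^sup>T v)\<close>.\<close>

lemma pos_def_schur_complement:
  fixes A :: "real^'m::finite^'m" and C :: "real^'k::finite^'k"
  assumes pd: "pos_def (block_mat A B (transpose B) C)"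
  shows "pos_def (schur_complement A B C)"
  unfolding pos_def_def
proof (intro conjI allI impI)
  have "pos_def C" using pd by (rule pos_def_block_mat_lower_right)
  then have "invertible C" by (rule pos_def_invertible)
  have "transpose A = A" "transpose C = C" using pd unfolding pos_def_def symmetric_block_mat_iff by blast+
  then have "transpose (matrix_inv C) = matrix_inv C"
    using transpose_matrix_inv_symmetric[OF \<open>invertible C\<close>] by blast
  with \<open>transpose A = A\<close> show "transpose (schur_complement A B C) = schur_complement A B C"
    by (simp add: schur_complement_def transpose_diff matrix_transpose_mul matrix_mul_assoc)
  fix v :: "real^'m" assume "v \<noteq> 0"
  define w where "w = - (matrix_inv C *v (transpose B *v v))"
  have "A *v v + B *v w = schur_complement A B C *v v"
    by (simp add: w_def schur_complement_def matrix_vector_mult_uminus_right matrix_vector_mult_diff_rdistrib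
        matrix_vector_mul_assoc matrix_mul_assoc del: transpose_matrix_vector)
  moreover have "transpose B *v v + C *v w = 0"
    by (simp add: w_def matrix_vector_mult_uminus_right matrix_vector_mul_assoc matrix_mul_assoc
        matrix_mult_matrix_inv[OF \<open>invertible C\<close>] del: transpose_matrix_vector)
  moreover have "concat_vec v w \<noteq> 0" using \<open>v \<noteq> 0\<close> by (simp add: concat_vec_eq_0_iff)
  then have "0 < concat_vec v w \<bullet> (block_mat A B (transpose B) C *v concat_vec v w)"
    using pd unfolding pos_def_def by blast
  ultimately show "0 < v \<bullet> (schur_complement A B C *v v)"
    by (simp add: block_mat_mult_concat_vec inner_concat_vec)
qed

lemma det_block_mat_schur:
  fixes A :: "real^'m::finite^'m" and C :: "real^'k::finite^'k"
  assumes "invertible C"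
  shows "det (block_mat A B R C) = det (A - B ** matrix_inv C ** R) * det C"
proof -
  have "block_mat A B R C =
      block_mat (mat 1) (B ** matrix_inv C) 0 (mat 1) ** block_mat (A - B ** matrix_inv C ** R) 0 R C"
    using matrix_inv_mult_matrix[OF assms]
    by (simp add: block_mat_mult matrix_mul_zero_left matrix_mul_zero_right flip: matrix_mul_assoc)
  moreover have "det (block_mat (mat 1) (B ** matrix_inv C) (0::real^'m^'k) (mat 1)) = 1"
    by (subst det_transpose[symmetric]) (simp add: transpose_block_mat transpose_zero det_block_mat_lower_triangular)
  ultimately show ?thesis by (simp add: det_mul det_block_mat_lower_triangular)
qed

text \<open>Solve \<open>\<Sigma> (w\<^sub>1, w\<^sub>2) = (u, z)\<close> by \<open>w\<^sub>1 = S\<^sup>-\<^sup>1 (u - \<mu>)\<close>, \<open>w\<^sub>2 = C\<^sup>-\<^sup>1 (z - B\<^sup>T w\<^sub>1)\<close>.\<close>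

lemma quadratic_form_block_mat_inverse:
  fixes A :: "real^'m::finite^'m" and C :: "real^'k::finite^'k" and z :: "real^'k"
  assumes C: "invertible C" "transpose C = C" and S: "invertible (schur_complement A B C)"
  defines "\<mu> \<equiv> B *v (matrix_inv C *v z)"
  shows "concat_vec u z \<bullet> (matrix_inv (block_mat A B (transpose B) C) *v concat_vec u z) =
    z \<bullet> (matrix_inv C *v z) + (u - \<mu>) \<bullet> (matrix_inv (schur_complement A B C) *v (u - \<mu>))"
proof -
  define Ci Si where "Ci = matrix_inv C" and "Si = matrix_inv (schur_complement A B C)"
  define w1 where "w1 = Si *v (u - \<mu>)"
  define w2 where "w2 = Ci *v (z - transpose B *v w1)"
  have "det (block_mat A B (transpose B) C) \<noteq> 0"
    using det_block_mat_schur[OF C(1), of A B "transpose B"] C(1) S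
    by (simp add: invertible_det_nz schur_complement_def)
  then have inv: "invertible (block_mat A B (transpose B) C)" by (simp add: invertible_det_nz)
  have "schur_complement A B C *v w1 = u - \<mu>"
    by (simp add: w1_def Si_def matrix_vector_mul_assoc matrix_mult_matrix_inv[OF S])
  moreover have "A *v w1 + B *v w2 = schur_complement A B C *v w1 + \<mu>"
    by (simp add: w2_def Ci_def \<mu>_def schur_complement_def matrix_vector_mult_diff_rdistrib
        matrix_vector_mult_diff_distrib matrix_vector_mul_assoc matrix_mul_assoc del: transpose_matrix_vector)
  ultimately have "A *v w1 + B *v w2 = u" by simp
  moreover have "transpose B *v w1 + C *v w2 = z"
    by (simp add: w2_def Ci_def matrix_vector_mul_assoc matrix_mult_matrix_inv[OF C(1)] del: transpose_matrix_vector)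
  ultimately have "matrix_inv (block_mat A B (transpose B) C) *v concat_vec u z = concat_vec w1 w2"
    by (intro matrix_inv_mult_vec_eq[OF inv]) (simp add: block_mat_mult_concat_vec)
  moreover have "z \<bullet> w2 = z \<bullet> (Ci *v z) - \<mu> \<bullet> w1"
  proof -
    have "transpose Ci = Ci" unfolding Ci_def by (rule transpose_matrix_inv_symmetric[OF C])
    then have "z \<bullet> (Ci *v (transpose B *v w1)) = \<mu> \<bullet> w1"
      by (metis inner_transpose_mult_vec \<mu>_def Ci_def)
    then show ?thesis by (simp add: w2_def matrix_vector_mult_diff_distrib inner_diff_right
        del: transpose_matrix_vector)
  qed
  ultimately show ?thesis by (simp add: inner_concat_vec w1_def Si_def Ci_def inner_diff_left)
qed

lemma lambda_dens_concat_pts: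
  fixes s :: "'m::finite \<Rightarrow> real^'d" and x :: "'k::finite \<Rightarrow> real^'d" and z :: "real^'k"
  assumes sym: "\<And>p q. \<rho> p q = \<rho> q p" and pd: "pos_def (cov_mat \<rho> (concat_pts s x))"
  defines "C \<equiv> cov_mat \<rho> x"
    and "S \<equiv> schur_complement (cov_mat \<rho> s) (cross_cov \<rho> s x) (cov_mat \<rho> x)"
    and "\<mu> \<equiv> cross_cov \<rho> s x *v (matrix_inv (cov_mat \<rho> x) *v z)"
    and "n \<equiv> real CARD('m) + real CARD('k)"
  shows "lambda_dens \<rho> (concat_pts s x) (concat_vec u z) =
    pi powr (-(n - 1) / 2) * (det S * det C) powr (-1/2)
    * (z \<bullet> (matrix_inv C *v z) + (u - \<mu>) \<bullet> (matrix_inv S *v (u - \<mu>))) powr (-(n + 1) / 2)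
    * Gamma ((n + 1) / 2)"
proof -
  have Sg: "cov_mat \<rho> (concat_pts s x) =
      block_mat (cov_mat \<rho> s) (cross_cov \<rho> s x) (transpose (cross_cov \<rho> s x)) C"
    unfolding C_def by (rule cov_mat_concat_pts[OF sym])
  with pd have "pos_def C" "pos_def S"
    unfolding S_def C_def by (auto intro: pos_def_block_mat_lower_right pos_def_schur_complement)
  then have C: "invertible C" "transpose C = C" and "invertible S"
    using pos_def_invertible unfolding pos_def_def by auto
  then show ?thesis
    unfolding lambda_dens_def Let_def Sg det_block_mat_schur[OF C(1)]
      quadratic_form_block_mat_inverse[OF C \<open>invertible S\<close>[unfolded S_def, folded C_def]]
    by (simp add: n_def card_UNIV_Plus S_def schur_complement_def \<mu>_def C_def)
qed

lemma student_density_scaleR: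
  fixes S :: "real^'m::finite^'m"
  assumes "c \<noteq> 0" "invertible S"
  shows "student_density \<nu> \<mu> (c *\<^sub>R S) u =
    pi powr (-real CARD('m) / 2) * \<nu> powr (-real CARD('m) / 2) * (c ^ CARD('m) * det S) powr (-1/2)
    * (1 + ((u - \<mu>) \<bullet> (matrix_inv S *v (u - \<mu>))) / (c * \<nu>)) powr (-(real CARD('m) + \<nu>) / 2)
    * Gamma ((real CARD('m) + \<nu>) / 2) / Gamma (\<nu> / 2)"
proof -
  have "(u - \<mu>) \<bullet> (matrix_inv (c *\<^sub>R S) *v (u - \<mu>)) / \<nu> =
      ((u - \<mu>) \<bullet> (matrix_inv S *v (u - \<mu>))) / (c * \<nu>)"
    using assms by (simp add: matrix_inv_scaleR scaleR_matrix_vector_assoc[symmetric] divide_inverse)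
  then show ?thesis by (simp add: student_density_def Let_def det_scaleR)
qed

lemma exponent_density_ratio_eq_student:
  fixes a q D E k :: real and m :: nat
  assumes a: "a > 0" and q: "q \<ge> 0" and D: "D > 0" and E: "E > 0" and k: "k \<ge> 0"
  shows "pi powr (-(real m + k - 1) / 2) * (D * E) powr (-1/2) * (a + q) powr (-(real m + k + 1) / 2)
      * Gamma ((real m + k + 1) / 2)
    / (pi powr (-(k - 1) / 2) * E powr (-1/2) * a powr (-(k + 1) / 2) * Gamma ((k + 1) / 2))
    = pi powr (-real m / 2) * (k + 1) powr (-real m / 2) * ((a / (k + 1)) ^ m * D) powr (-1/2)
      * (1 + q / (a / (k + 1) * (k + 1))) powr (-(real m + (k + 1)) / 2)
      * Gamma ((real m + (k + 1)) / 2) / Gamma ((k + 1) / 2)"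
    (is "?L = ?R")
proof -
  have g: "Gamma ((real m + k + 1) / 2) > 0" "Gamma ((real m + (k + 1)) / 2) > 0" "Gamma ((k + 1) / 2) > 0"
    using k by (auto intro!: Gamma_real_pos)
  have k1: "k + 1 > 0" using k by simp
  have aq: "a + q > 0" using a q by simp
  have "a / (k + 1) * (k + 1) = a" using k1 by simp
  then have e: "1 + q / (a / (k + 1) * (k + 1)) = (a + q) / a" using a by (simp add: field_simps)
  have c: "(a / (k + 1)) ^ m * D > 0" using a k1 D by simp
  have "?L > 0" using g aq a D E by simp
  moreover have "?R > 0" using g aq a k1 c unfolding e by (intro divide_pos_pos mult_pos_pos) auto
  moreover have "ln ?L = ln ?R"
    unfolding e using g aq a D E k1 c
    by (simp add: ln_mult ln_div ln_powr ln_realpow field_simps)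
  ultimately show ?thesis by simp
qed

theorem mainTheorem4:
  fixes \<rho> :: "real^'d \<Rightarrow> real^'d \<Rightarrow> real"
    and s :: "'m::finite \<Rightarrow> real^'d"
    and x :: "'k::finite \<Rightarrow> real^'d"
    and u :: "real^'m" and z :: "real^'k"
  assumes "correlation_function \<rho>"
    and "pos_def (cov_mat \<rho> (concat_pts s x))"
    and "z \<noteq> 0"
  shows "cond_intensity \<rho> s x z u =
    student_density (real CARD('k) + 1)
      (cross_cov \<rho> s x *v (matrix_inv (cov_mat \<rho> x) *v z))
      (((z \<bullet> (matrix_inv (cov_mat \<rho> x) *v z)) / (real CARD('k) + 1)) *\<^sub>R
        (cov_mat \<rho> s - cross_cov \<rho> s x ** matrix_inv (cov_mat \<rho> x) ** transpose (cross_cov \<rho> s x)))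
      u"
proof -
  define C where "C = cov_mat \<rho> x"
  define S where "S = schur_complement (cov_mat \<rho> s) (cross_cov \<rho> s x) C"
  define a where "a = z \<bullet> (matrix_inv C *v z)"
  define \<mu> where "\<mu> = cross_cov \<rho> s x *v (matrix_inv C *v z)"
  have sym: "\<And>p q. \<rho> p q = \<rho> q p" using assms(1) unfolding correlation_function_def by blast
  note pd = assms(2)[unfolded cov_mat_concat_pts[OF sym]]
  have "pos_def C" "pos_def S"
    using pos_def_block_mat_lower_right[OF pd] pos_def_schur_complement[OF pd] by (simp_all add: C_def S_def)
  have "a > 0" using pos_def_matrix_inv[OF \<open>pos_def C\<close>] assms(3) unfolding pos_def_def a_def by blast
  have "a / (real CARD('k) + 1) \<noteq> 0" using \<open>a > 0\<close> by simp
  have "cond_intensity \<rho> s x z u = student_density (real CARD('k) + 1) \<mu> ((a / (real CARD('k) + 1)) *\<^sub>R S) u"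
    unfolding cond_intensity_def lambda_dens_concat_pts[OF sym assms(2)]
      student_density_scaleR[OF \<open>a / (real CARD('k) + 1) \<noteq> 0\<close> pos_def_invertible[OF \<open>pos_def S\<close>]]
    unfolding lambda_dens_def[where y = x] Let_def C_def[symmetric] S_def[symmetric] a_def[symmetric] \<mu>_def[symmetric]
    by (rule exponent_density_ratio_eq_student[OF \<open>a > 0\<close>
          pos_def_quadratic_nonneg[OF pos_def_matrix_inv[OF \<open>pos_def S\<close>]]
          pos_def_det_pos[OF \<open>pos_def S\<close>] pos_def_det_pos[OF \<open>pos_def C\<close>]]) simp
  then show ?thesis by (simp add: C_def S_def a_def \<mu>_def schur_complement_def)
qed

end
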